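(* Let $c=1/3$ for quadrangulations and $c=1/2$ for triangulations, and let $v>1$. Under the limiting joint law of $(L(d),L(vd))$ as $d\to\infty$ under $P_\infty$, the conditional expectation of the second coordinate given that the first equals $L_1$ is $$L_{\rm av}(v\,|\,L_1)=\frac{3c(v-1)^2+3\sqrt{\pi cL_1}\,(v-1)+2L_1}{2v^2}.$$ Here the limiting joint law is the one with density $$\mathcal P(L_1,L_2;v)=\frac{2}{\sqrt\pi}\frac{\sqrt{L_1}}{c^{3/2}}e^{-L_1/c}\cdot\frac{\sqrt2}{c}\frac{v^2e^{-\frac{L_2v^2}{c(v-1)^2}}}{(v-1)^2}\sum_{n\ge0}\frac{(-1)^n\left(\frac{L_1}{c(v-1)^2}\right)^{n/2}\pi_n\!\left(\sqrt{\frac{2L_2v^2}{c(v-1)^2}}\right)}{(n+1)!\,\Gamma\!\left(\frac{n+1}{2}\right)},$$ where $\pi_n(t)=-e^{t^2/2}\frac{d^{n+1}}{dt^{n+1}}(t^ne^{-t^2/2})$.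
   Context: A planar quadrangulation (resp. triangulation) is a planar map all of whose faces have degree 4 (resp. 3). A $k$-pointed-rooted map carries: - a marked vertex $v_0$; - a marked edge $e_1$ oriented from a vertex $v_1$ at graph distance $k$ from $v_0$ to a vertex at distance $k-1$. Cutting along the leftmost shortest path from $v_1$ to $v_0$ (first step $e_1$, then always the leftmost edge decreasing the distance to $v_0$) gives a $k$-slice. Its left boundary consists of the $k$ edges from $v_1$ to $v_0$, and its right boundary of the $k-1$ edges from the endpoint of $e_1$ to $v_0$. Hull perimeter, quadrangulations ($2\le d\le k-1$). Start at the right-boundary vertex $v^{(0)}$ at distance $d-1$. Repeatedly, from $v^{(i)}$, follow the leftmost 2-step path $v^{(i)}\to w\to v^{(i+1)}$, with respect to the first edge of the leftmost shortest path from $v^{(i)}$ to $v_0$, where $d(v_0,w)=d$, $d(v_0,v^{(i+1)})=d-1$ and $v^{(i+1)}\ne v^{(i)}$. This stops after $p$ steps at the left-boundary vertex at distance $d-1$, and $\mathcal L(d)=2p$. Hull perimeter, triangulations ($1\le d\le k-1$). Start at the right-boundary vertex at distance $d$. Repeatedly follow the leftmost edge, in the same sense, to a distinct vertex at distance $d$, until reaching the left-boundary vertex at distance $d$ after $p$ steps; then $\mathcal L(d)=p$. Local limit. $P_k$ is the $N\to\infty$ limit of the uniform measure on $k$-pointed-rooted maps of the given type with $N$ faces, and $P_\infty=\lim_{k\to\infty}P_k$. Finally $L(d)=\mathcal L(d)/d^2$. *)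

theory Defs
  imports "HOL-Analysis.Analysis"
begin

definition pin :: "nat \<Rightarrow> real \<Rightarrow> real" where
  "pin n t = - exp (t\<^sup>2 / 2) * ((deriv ^^ (Suc n)) (\<lambda>s. s ^ n * exp (- s\<^sup>2 / 2)) t)"

definition jointDensity :: "real \<Rightarrow> real \<Rightarrow> real \<Rightarrow> real \<Rightarrow> real" where
  "jointDensity c v L1 L2 =
     (2 / sqrt pi) * sqrt L1 / c powr (3/2) * exp (- L1 / c)
     * (sqrt 2 / c) * (v\<^sup>2 * exp (- (L2 * v\<^sup>2) / (c * (v - 1)\<^sup>2)) / (v - 1)\<^sup>2)
     * (\<Sum>n. (-1) ^ n * (L1 / (c * (v - 1)\<^sup>2)) powr (real n / 2)
              * pin n (sqrt (2 * L2 * v\<^sup>2 / (c * (v - 1)\<^sup>2)))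
              / (fact (Suc n) * Gamma ((real n + 1) / 2)))"

definition Lav :: "real \<Rightarrow> real \<Rightarrow> real \<Rightarrow> real" where
  "Lav c v L1 = (3 * c * (v - 1)\<^sup>2 + 3 * sqrt (pi * c * L1) * (v - 1) + 2 * L1) / (2 * v\<^sup>2)"

end

theory Submission
  imports Defs "HOL-Computational_Algebra.Polynomial"
begin

text \<open>Put \<open>a = L\<^sub>1 / (c (v - 1)\<^sup>2)\<close> and \<open>b = v\<^sup>2 / (c (v - 1)\<^sup>2)\<close>. As a function of \<open>L\<^sub>2\<close> the density
  is a positive constant times \<open>\<Sum>\<^sub>n c\<^sub>n(a) exp (- b L\<^sub>2) \<pi>\<^sub>n(\<surd>(2 b L\<^sub>2))\<close>. Since
  \<open>\<pi>\<^sub>n(t) exp (- t\<^sup>2/2)\<close> is minus the \<open>(n+1)\<close>-st derivative of \<open>t\<^sup>n exp (- t\<^sup>2/2)\<close>, integration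
  by parts in \<open>t = \<surd>(2 b L\<^sub>2)\<close> shows that the \<open>n\<close>-th term has integral zero for \<open>n \<ge> 1\<close> and
  first moment zero for \<open>n \<ge> 3\<close>; the surviving moments are Gamma integrals, and their ratio is
  \<open>L\<^sub>a\<^sub>v\<close>. A Taylor estimate of \<open>\<pi>\<^sub>n\<close> bounds the \<open>n\<close>-th term by \<open>C 2\<^sup>-\<^sup>n exp (- b L\<^sub>2 / 4)\<close>,
  which justifies integrating termwise.\<close>

section \<open>Derivatives of \<open>t\<^sup>n e\<^sup>-\<^sup>t\<^sup>\<^sup>2\<^sup>/\<^sup>2\<close>\<close>

text \<open>The sign-flipped recursion describes the derivatives of \<open>t\<^sup>n e\<^sup>t\<^sup>\<^sup>2\<^sup>/\<^sup>2\<close>; its coefficients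
  are nonnegative and dominate those of \<open>gauss_deriv_poly\<close>, so the Taylor expansion of
  \<open>t\<^sup>n e\<^sup>t\<^sup>\<^sup>2\<^sup>/\<^sup>2\<close> bounds \<open>pin n\<close>.\<close>

fun gauss_deriv_poly :: "nat \<Rightarrow> nat \<Rightarrow> real poly" where
  "gauss_deriv_poly n 0 = monom 1 n"
| "gauss_deriv_poly n (Suc k) = pderiv (gauss_deriv_poly n k) - pCons 0 (gauss_deriv_poly n k)"

fun gauss_majorant_poly :: "nat \<Rightarrow> nat \<Rightarrow> real poly" where
  "gauss_majorant_poly n 0 = monom 1 n"
| "gauss_majorant_poly n (Suc k) = pderiv (gauss_majorant_poly n k) + pCons 0 (gauss_majorant_poly n k)"

definition gauss_deriv :: "nat \<Rightarrow> nat \<Rightarrow> real \<Rightarrow> real" where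
  "gauss_deriv n k t = poly (gauss_deriv_poly n k) t * exp (- t\<^sup>2 / 2)"

definition gauss_majorant :: "nat \<Rightarrow> nat \<Rightarrow> real \<Rightarrow> real" where
  "gauss_majorant n k t = poly (gauss_majorant_poly n k) t * exp (t\<^sup>2 / 2)"

lemma gauss_deriv_has_real_derivative:
  "(gauss_deriv n k has_real_derivative gauss_deriv n (Suc k) t) (at t)"
proof -
  let ?p = "gauss_deriv_poly n k"
  have "((\<lambda>t. poly ?p t * exp (- t\<^sup>2 / 2)) has_real_derivative
      poly (pderiv ?p) t * exp (- t\<^sup>2 / 2) + poly ?p t * (exp (- t\<^sup>2 / 2) * (- (2 * t) / 2))) (at t)"
    by (auto intro!: derivative_eq_intros poly_DERIV)
  then show ?thesis unfolding gauss_deriv_def by (simp add: algebra_simps)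
qed

lemma gauss_majorant_has_real_derivative:
  "(gauss_majorant n k has_real_derivative gauss_majorant n (Suc k) t) (at t)"
proof -
  let ?p = "gauss_majorant_poly n k"
  have "((\<lambda>t. poly ?p t * exp (t\<^sup>2 / 2)) has_real_derivative
      poly (pderiv ?p) t * exp (t\<^sup>2 / 2) + poly ?p t * (exp (t\<^sup>2 / 2) * ((2 * t) / 2))) (at t)"
    by (auto intro!: derivative_eq_intros poly_DERIV)
  then show ?thesis unfolding gauss_majorant_def by (simp add: algebra_simps)
qed

lemma funpow_deriv_gauss: "(deriv ^^ k) (\<lambda>s. s ^ n * exp (- s\<^sup>2 / 2)) = gauss_deriv n k"
proof (induction k)
  case 0
  show ?case by (auto simp: gauss_deriv_def poly_monom)
next
  case (Suc k)
  show ?case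
    by (simp only: funpow.simps o_apply Suc.IH)
      (intro ext DERIV_imp_deriv gauss_deriv_has_real_derivative)
qed

lemma pin_eq_poly: "pin n t = - poly (gauss_deriv_poly n (Suc n)) t"
  unfolding pin_def funpow_deriv_gauss gauss_deriv_def by (simp add: exp_minus field_simps)

lemma pin_mult_exp: "pin n t * exp (- t\<^sup>2 / 2) = - gauss_deriv n (Suc n) t"
  unfolding pin_eq_poly gauss_deriv_def by (simp del: gauss_deriv_poly.simps)

lemma pin_0: "pin 0 t = t"
  by (simp add: pin_eq_poly monom_0 pderiv_pCons)

lemma pin_1: "pin 1 t = 3 * t - t ^ 3"
  by (simp add: pin_eq_poly monom_0 monom_Suc pderiv_pCons numeral_eq_Suc algebra_simps)

lemma pin_2: "pin 2 t = 12 * t - 9 * t ^ 3 + t ^ 5"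
  by (simp add: pin_eq_poly monom_0 monom_Suc pderiv_pCons numeral_eq_Suc algebra_simps)

lemma coeff_gauss_deriv_poly_eq_0: "i + k < n \<Longrightarrow> coeff (gauss_deriv_poly n k) i = 0"
proof (induction k arbitrary: i)
  case 0
  then show ?case by (simp add: coeff_monom)
next
  case (Suc k)
  then show ?case by (cases i) (auto simp: coeff_pderiv)
qed

lemma gauss_deriv_at_0: "k < n \<Longrightarrow> gauss_deriv n k 0 = 0"
  by (simp add: gauss_deriv_def poly_0_coeff_0 coeff_gauss_deriv_poly_eq_0)

lemma power_mult_exp_gauss_tendsto_0: "((\<lambda>t::real. t ^ i * exp (- (t\<^sup>2 / 2))) \<longlongrightarrow> 0) at_top"
proof (rule tendsto_sandwich[of "\<lambda>_. 0" _ _ "\<lambda>t. t ^ i / exp t"])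
  show "\<forall>\<^sub>F t::real in at_top. 0 \<le> t ^ i * exp (- (t\<^sup>2 / 2))"
    using eventually_ge_at_top[of "0::real"] by eventually_elim auto
  show "\<forall>\<^sub>F t::real in at_top. t ^ i * exp (- (t\<^sup>2 / 2)) \<le> t ^ i / exp t"
    using eventually_ge_at_top[of "2::real"]
  proof eventually_elim
    fix t :: real assume t: "2 \<le> t"
    have "t * 2 \<le> t * t" using t by (intro mult_left_mono) auto
    then have "t \<le> t\<^sup>2 / 2" by (simp add: power2_eq_square)
    then have "exp (- (t\<^sup>2 / 2)) \<le> exp (- t)" by simp
    then have "t ^ i * exp (- (t\<^sup>2 / 2)) \<le> t ^ i * exp (- t)"
      by (rule mult_left_mono) (use t in simp)
    moreover have "t ^ i / exp t = t ^ i * exp (- t)" by (simp add: exp_minus divide_inverse)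
    ultimately show "t ^ i * exp (- (t\<^sup>2 / 2)) \<le> t ^ i / exp t" by simp
  qed
qed (auto intro: tendsto_power_div_exp_0)

lemma poly_mult_exp_gauss_tendsto_0: "((\<lambda>t::real. poly p t * exp (- (t\<^sup>2 / 2))) \<longlongrightarrow> 0) at_top"
proof -
  have "(\<lambda>t. poly p t * exp (- (t\<^sup>2 / 2))) = (\<lambda>t. \<Sum>i\<le>degree p. coeff p i * (t ^ i * exp (- (t\<^sup>2 / 2))))"
    by (simp add: poly_altdef sum_distrib_right mult.assoc)
  moreover have "((\<lambda>t. \<Sum>i\<le>degree p. coeff p i * (t ^ i * exp (- (t\<^sup>2 / 2)))) \<longlongrightarrow> 0) at_top"
    by (intro tendsto_null_sum tendsto_mult_right_zero power_mult_exp_gauss_tendsto_0)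
  ultimately show ?thesis by simp
qed

lemma power_mult_gauss_deriv_tendsto_0: "((\<lambda>t. t ^ j * gauss_deriv n k t) \<longlongrightarrow> 0) at_top"
proof -
  have "(\<lambda>t. t ^ j * gauss_deriv n k t) = (\<lambda>t. poly (monom 1 j * gauss_deriv_poly n k) t * exp (- (t\<^sup>2 / 2)))"
    by (simp add: gauss_deriv_def poly_monom mult.assoc)
  then show ?thesis using poly_mult_exp_gauss_tendsto_0 by metis
qed

lemma abs_coeff_gauss_deriv_poly_le: "\<bar>coeff (gauss_deriv_poly n k) i\<bar> \<le> coeff (gauss_majorant_poly n k) i"
proof (induction k arbitrary: i)
  case 0
  then show ?case by (simp add: coeff_monom)
next
  case (Suc k)
  have IH': "\<bar>of_nat (Suc i) * coeff (gauss_deriv_poly n k) (Suc i)\<bar>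
      \<le> of_nat (Suc i) * coeff (gauss_majorant_poly n k) (Suc i)"
    using Suc.IH[of "Suc i"] by (simp add: abs_mult mult_left_mono)
  show ?case
  proof (cases i)
    case 0
    then show ?thesis using IH' by (simp add: coeff_pderiv)
  next
    case (Suc j)
    then show ?thesis using IH' Suc.IH[of j] by (simp add: coeff_pderiv del: of_nat_Suc)
  qed
qed
lemma coeff_gauss_majorant_poly_nonneg: "coeff (gauss_majorant_poly n k) i \<ge> 0"
proof (induction k arbitrary: i)
  case 0
  then show ?case by (simp add: coeff_monom)
next
  case (Suc k)
  then show ?case by (cases i) (auto simp: coeff_pderiv)
qed

lemma abs_poly_gauss_deriv_poly_le: "\<bar>poly (gauss_deriv_poly n k) x\<bar> \<le> poly (gauss_majorant_poly n k) \<bar>x\<bar>"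
proof -
  let ?P = "gauss_deriv_poly n k" and ?B = "gauss_majorant_poly n k"
  have "degree ?P \<le> degree ?B"
  proof (rule degree_le, intro allI impI)
    fix i assume "degree ?B < i"
    then show "coeff ?P i = 0" using abs_coeff_gauss_deriv_poly_le[of n k i] by (simp add: coeff_eq_0)
  qed
  then have "poly ?P x = (\<Sum>i\<le>degree ?B. coeff ?P i * x ^ i)"
    unfolding poly_altdef by (intro sum.mono_neutral_left) (auto simp: coeff_eq_0)
  then have "\<bar>poly ?P x\<bar> \<le> (\<Sum>i\<le>degree ?B. \<bar>coeff ?P i * x ^ i\<bar>)"
    by (simp add: sum_abs)
  also have "\<dots> \<le> (\<Sum>i\<le>degree ?B. coeff ?B i * \<bar>x\<bar> ^ i)"
    by (intro sum_mono) (simp add: abs_mult power_abs mult_right_mono abs_coeff_gauss_deriv_poly_le)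
  also have "\<dots> = poly ?B \<bar>x\<bar>" by (simp add: poly_altdef)
  finally show ?thesis .
qed

lemma gauss_majorant_nonneg: "x \<ge> 0 \<Longrightarrow> gauss_majorant n k x \<ge> 0"
  unfolding gauss_majorant_def poly_altdef
  by (intro mult_nonneg_nonneg sum_nonneg coeff_gauss_majorant_poly_nonneg) auto

text \<open>All Taylor coefficients of \<open>t\<^sup>n e\<^sup>t\<^sup>\<^sup>2\<^sup>/\<^sup>2\<close> at \<open>x \<ge> 0\<close> are nonnegative, so a single
  term of the expansion at \<open>x + r\<close> is bounded by the value there.\<close>
lemma gauss_majorant_taylor_bound:
  assumes x: "x \<ge> 0" and r: "r > 0"
  shows "gauss_majorant n k x * r ^ k / fact k \<le> (x + r) ^ n * exp ((x + r)\<^sup>2 / 2)"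
proof -
  obtain t where t: "x < t" "t < x + r" and
    eq: "gauss_majorant n 0 (x + r) = (\<Sum>m<Suc k. gauss_majorant n m x / fact m * (x + r - x) ^ m)
          + gauss_majorant n (Suc k) t / fact (Suc k) * (x + r - x) ^ Suc k"
    using Taylor_up[of "Suc k" "gauss_majorant n" "gauss_majorant n 0" x "x + r" x]
      gauss_majorant_has_real_derivative r by auto
  have "gauss_majorant n k x * r ^ k / fact k \<le> (\<Sum>m<Suc k. gauss_majorant n m x / fact m * r ^ m)"
    using x r by (simp add: gauss_majorant_nonneg sum_nonneg)
  also have "\<dots> \<le> gauss_majorant n 0 (x + r)"
    using eq t x r by (simp add: gauss_majorant_nonneg)
  finally show ?thesis by (simp add: gauss_majorant_def poly_monom)
qed

lemma abs_pin_le: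
  assumes t: "t \<ge> 0" and r: "r > 0"
  shows "\<bar>pin n t\<bar> \<le> fact (Suc n) * (t + r) ^ n * exp ((t + r)\<^sup>2 / 2 - t\<^sup>2 / 2) / r ^ Suc n"
proof -
  define B where "B = poly (gauss_majorant_poly n (Suc n)) t"
  define F :: real where "F = fact (Suc n)"
  have "B * exp (t\<^sup>2 / 2) * r ^ Suc n / F \<le> (t + r) ^ n * exp ((t + r)\<^sup>2 / 2)"
    using gauss_majorant_taylor_bound[OF t r, of n "Suc n"]
    unfolding B_def F_def gauss_majorant_def .
  moreover have "F > 0" by (simp add: F_def)
  ultimately have B: "B \<le> F * (t + r) ^ n * exp ((t + r)\<^sup>2 / 2) / (exp (t\<^sup>2 / 2) * r ^ Suc n)"
    using r by (simp add: field_simps)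
  have "\<bar>pin n t\<bar> \<le> B"
    using abs_poly_gauss_deriv_poly_le[of n "Suc n" t] t by (simp add: pin_eq_poly B_def)
  also have "\<dots> \<le> fact (Suc n) * (t + r) ^ n * exp ((t + r)\<^sup>2 / 2) / (exp (t\<^sup>2 / 2) * r ^ Suc n)"
    using B by (simp add: F_def)
  also have "\<dots> = fact (Suc n) * (t + r) ^ n * exp ((t + r)\<^sup>2 / 2 - t\<^sup>2 / 2) / r ^ Suc n"
    by (simp add: exp_diff)
  finally show ?thesis .
qed


section \<open>Geometric decay of the series terms\<close>

lemma power_div_fact_le_exp:
  fixes z :: real
  assumes "z \<ge> 0"
  shows "z ^ m / fact m \<le> exp z"
proof -
  have s: "(\<lambda>n. z ^ n / fact n) sums exp z"
    using exp_converges[of z] by (simp add: divide_inverse scaleR_conv_of_real mult.commute)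
  have "(\<Sum>n\<in>{m}. z ^ n / fact n) \<le> (\<Sum>n. z ^ n / fact n)"
    by (rule sum_le_suminf) (use s assms in \<open>auto simp: sums_summable\<close>)
  then show ?thesis using s by (simp add: sums_unique[symmetric])
qed

lemma fact_mult_sqrt_pi_le_Gamma: "fact m * sqrt pi \<le> 2 ^ m * Gamma (real m + 1/2)"
proof (induction m)
  case 0
  then show ?case by (simp add: Gamma_one_half_real)
next
  case (Suc m)
  have Gamma_Suc: "Gamma (real m + 1/2 + 1) = (real m + 1/2) * Gamma (real m + 1/2)"
    by (rule Gamma_plus1) (auto simp: nonpos_Ints_def)
  have "fact (Suc m) * sqrt pi = (real m + 1) * (fact m * sqrt pi)" by simp
  also have "\<dots> \<le> (real m + 1) * (2 ^ m * Gamma (real m + 1/2))"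
    by (intro mult_left_mono Suc.IH) auto
  also have "\<dots> \<le> 2 ^ Suc m * ((real m + 1/2) * Gamma (real m + 1/2))"
    using Gamma_real_pos[of "real m + 1/2"] by (simp add: algebra_simps mult_right_mono)
  also have "\<dots> = 2 ^ Suc m * Gamma (real (Suc m) + 1/2)"
    using Gamma_Suc by (simp add: add_ac)
  finally show ?case .
qed

lemma power_even_div_fact_le: "(y::real) ^ (2 * m) / fact m \<le> exp (8 * y\<^sup>2) * (1/8) ^ m"
proof -
  have "(8 * y\<^sup>2) ^ m * (1/8) ^ m = (8 * y\<^sup>2 * (1/8)) ^ m"
    by (rule power_mult_distrib[symmetric])
  also have "\<dots> = y ^ (2 * m)" by (simp add: power_mult)
  finally have "y ^ (2 * m) / fact m = (8 * y\<^sup>2) ^ m / fact m * (1/8) ^ m" by simp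
  also have "\<dots> \<le> exp (8 * y\<^sup>2) * (1/8) ^ m"
    by (intro mult_right_mono power_div_fact_le_exp) auto
  finally show ?thesis .
qed

lemma quarter_power_half_le: "(1/4 :: real) ^ (n div 2) \<le> 2 * (1/2) ^ n"
proof -
  have "(1/2 :: real) ^ (2 * (n div 2)) = (1/4) ^ (n div 2)"
    by (simp add: power_mult power2_eq_square)
  moreover have "(1/2 :: real) ^ (2 * (n div 2) + 1) \<le> (1/2) ^ n"
    by (rule power_decreasing) auto
  ultimately show ?thesis by simp
qed

text \<open>Splitting \<open>n\<close> by parity, \<open>\<Gamma>((n+1)/2)\<close> is \<open>\<Gamma>(m + 1/2) \<ge> m!/2\<^sup>m\<close> or \<open>m!\<close>.\<close>
lemma power_div_Gamma_half_le:
  assumes y: "y \<ge> 0"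
  shows "y ^ n / Gamma ((real n + 1) / 2) \<le> 2 * (1 + y) * exp (8 * y\<^sup>2) * (1/2) ^ n"
proof -
  have "y ^ n / Gamma ((real n + 1) / 2) \<le> (1 + y) * exp (8 * y\<^sup>2) * (1/4) ^ (n div 2)"
  proof (cases "even n")
    case True
    then obtain m where n: "n = 2 * m" by auto
    have "1 \<le> sqrt pi" using pi_gt3 by (simp add: real_le_rsqrt)
    then have "fact m \<le> fact m * sqrt pi" by simp
    then have "fact m \<le> 2 ^ m * Gamma (real m + 1/2)"
      using fact_mult_sqrt_pi_le_Gamma[of m] by linarith
    then have "fact m / 2 ^ m \<le> Gamma (real m + 1/2)" by (simp add: field_simps)
    moreover have "(real n + 1) / 2 = real m + 1/2" using n by simp
    ultimately have "y ^ n / Gamma ((real n + 1) / 2) \<le> y ^ (2 * m) / (fact m / 2 ^ m)"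
      using y by (simp only: n) (intro divide_left_mono, auto)
    also have "\<dots> = y ^ (2 * m) / fact m * 2 ^ m" by simp
    also have "\<dots> \<le> exp (8 * y\<^sup>2) * (1/8) ^ m * 2 ^ m"
      by (intro mult_right_mono power_even_div_fact_le) auto
    also have "\<dots> = exp (8 * y\<^sup>2) * (1/4) ^ m"
      by (simp add: power_one_over field_simps flip: power_mult_distrib)
    also have "\<dots> \<le> (1 + y) * exp (8 * y\<^sup>2) * (1/4) ^ (n div 2)"
      using y n by (simp add: mult_right_mono)
    finally show ?thesis .
  next
    case False
    then obtain m where n: "n = 2 * m + 1" using oddE by blast
    have half: "(real n + 1) / 2 = 1 + real m" using n by simp
    have "Gamma ((real n + 1) / 2) = fact m"
      unfolding half using Gamma_fact[of m] by simp
    then have "y ^ n / Gamma ((real n + 1) / 2) = y * (y ^ (2 * m) / fact m)"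
      by (simp add: n)
    also have "\<dots> \<le> y * (exp (8 * y\<^sup>2) * (1/8) ^ m)"
      by (intro mult_left_mono power_even_div_fact_le y)
    also have "\<dots> \<le> (1 + y) * (exp (8 * y\<^sup>2) * (1/4) ^ m)"
      using y by (intro mult_mono mult_left_mono power_mono) auto
    also have "\<dots> = (1 + y) * exp (8 * y\<^sup>2) * (1/4) ^ (n div 2)"
      using n by simp
    finally show ?thesis .
  qed
  also have "\<dots> \<le> (1 + y) * exp (8 * y\<^sup>2) * (2 * (1/2) ^ n)"
    using y by (intro mult_left_mono quarter_power_half_le) auto
  finally show ?thesis by (simp only: mult_ac)
qed

text \<open>With \<open>a = L\<^sub>1 / (c (v - 1)\<^sup>2)\<close> and \<open>b = v\<^sup>2 / (c (v - 1)\<^sup>2)\<close>, the density is a constant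
  multiple of \<open>\<Sum>n. series_coeff a n * series_term b n L\<^sub>2\<close>. The hypotheses \<open>a > 0\<close> below
  also exclude the junk value \<open>0 powr 0 = 0\<close>.\<close>

definition series_coeff :: "real \<Rightarrow> nat \<Rightarrow> real" where
  "series_coeff a n = (-1) ^ n * a powr (real n / 2) / (fact (Suc n) * Gamma ((real n + 1) / 2))"

definition series_term :: "real \<Rightarrow> nat \<Rightarrow> real \<Rightarrow> real" where
  "series_term b n L = exp (- (b * L)) * pin n (sqrt (2 * b * L))"

lemma abs_series_coeff:
  assumes "a > 0"
  shows "\<bar>series_coeff a n\<bar> = sqrt a ^ n / (fact (Suc n) * Gamma ((real n + 1) / 2))"
proof -
  have "a powr (real n / 2) = (a powr (1/2)) powr real n" by (simp add: powr_powr)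
  also have "\<dots> = sqrt a ^ n" using assms by (simp add: powr_half_sqrt powr_realpow)
  finally show ?thesis
    using assms Gamma_real_pos[of "(real n + 1) / 2"] by (simp add: series_coeff_def abs_mult power_abs)
qed

lemma series_coeff_nonzero:
  assumes "a > 0"
  shows "series_coeff a n \<noteq> 0"
proof -
  have "sqrt a ^ n / (fact (Suc n) * Gamma ((real n + 1) / 2)) > 0"
    using assms by (intro divide_pos_pos mult_pos_pos) auto
  then show ?thesis using abs_series_coeff[OF assms, of n] by auto
qed

lemma series_coeff_0: "a > 0 \<Longrightarrow> series_coeff a 0 = 1 / sqrt pi"
  by (simp add: series_coeff_def Gamma_one_half_real)

lemma series_coeff_1:
  assumes "a > 0"
  shows "series_coeff a 1 = - sqrt a / 2"
proof -
  have "a powr (1/2) = sqrt a" using assms by (simp add: powr_half_sqrt)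
  then show ?thesis using Gamma_fact[of 0] by (simp add: series_coeff_def)
qed

lemma Gamma_half_integer_values:
  "Gamma (3/2 :: real) = sqrt pi / 2" "Gamma (5/2 :: real) = 3 * sqrt pi / 4"
  "Gamma (7/2 :: real) = 15 * sqrt pi / 8" "Gamma (9/2 :: real) = 105 * sqrt pi / 16"
proof -
  have step: "Gamma (x + 1) = x * Gamma x" if "x > 0" for x :: real
    using that by (intro Gamma_plus1) (auto dest: nonpos_Ints_nonpos)
  show g3: "Gamma (3/2 :: real) = sqrt pi / 2"
    using step[of "1/2"] by (simp add: Gamma_one_half_real)
  show g5: "Gamma (5/2 :: real) = 3 * sqrt pi / 4"
    using step[of "3/2"] g3 by simp
  show g7: "Gamma (7/2 :: real) = 15 * sqrt pi / 8"
    using step[of "5/2"] g5 by simp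
  show "Gamma (9/2 :: real) = 105 * sqrt pi / 16"
    using step[of "7/2"] g7 by simp
qed

lemma series_coeff_2:
  assumes "a > 0"
  shows "series_coeff a 2 = a / (3 * sqrt pi)"
  using assms Gamma_half_integer_values(1) by (simp add: series_coeff_def fact_numeral)

text \<open>Choosing \<open>r\<close> of order \<open>\<surd>a\<close> in the Taylor estimate of \<open>pin\<close> keeps \<open>8 y\<^sup>2\<close> below \<open>t\<^sup>2/8\<close>
  up to a constant, so the Gaussian factor still wins.\<close>
lemma gaussian_exponent_bound:
  fixes a t :: real
  assumes a: "a \<ge> 0" and t: "t \<ge> 0" and rp: "r > 0" and r: "12 * sqrt a \<le> r"
  defines "y \<equiv> sqrt a * (t + r) / r"
  shows "(1 + y) * exp (8 * y\<^sup>2) * exp ((t + r)\<^sup>2 / 2 - t\<^sup>2)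
    \<le> exp (5/2 * r\<^sup>2 + 16 * a + sqrt a + 1 - t\<^sup>2 / 8)"
proof -
  define s where "s = sqrt a"
  define q where "q = s / r"
  have s0: "s \<ge> 0" and ss: "s\<^sup>2 = a" using a by (simp_all add: s_def)
  have q0: "q \<ge> 0" using s0 rp by (simp add: q_def)
  have q1: "q \<le> 1/12" using rp r unfolding q_def s_def by (simp add: field_simps)
  have yq: "y = q * t + s" using rp unfolding y_def q_def s_def by (simp add: field_simps)
  have "t * r \<le> t\<^sup>2 / 8 + 2 * r\<^sup>2"
    using sum_power2_ge_zero[of "t - 4 * r" 0] by (simp add: power2_eq_square algebra_simps)
  moreover have "8 * y\<^sup>2 \<le> t\<^sup>2 / 8 + 16 * a"
  proof -
    have "y\<^sup>2 \<le> 2 * (q\<^sup>2 * t\<^sup>2) + 2 * s\<^sup>2"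
      using zero_le_power2[of "q * t - s"] unfolding yq by (simp add: power2_eq_square algebra_simps)
    moreover have "q\<^sup>2 \<le> (1/12)\<^sup>2" using q0 q1 by (intro power_mono) auto
    then have "q\<^sup>2 * t\<^sup>2 \<le> 1/144 * t\<^sup>2" by (intro mult_right_mono) (auto simp: power2_eq_square)
    ultimately show ?thesis using ss zero_le_power2[of t] by linarith
  qed
  moreover have "y \<le> t\<^sup>2 / 8 + s + 1"
  proof -
    have "q * t \<le> 1/12 * t" using q1 t by (intro mult_right_mono) auto
    moreover have "1/12 * t \<le> t\<^sup>2 / 8 + 1"
      using zero_le_power2[of "t - 1/3"] by (simp add: power2_eq_square algebra_simps)
    ultimately show ?thesis using yq by linarith
  qed
  moreover have "(t + r)\<^sup>2 / 2 - t\<^sup>2 = r\<^sup>2 / 2 + t * r - t\<^sup>2 / 2"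
    by (simp add: power2_eq_square algebra_simps)
  ultimately have exponent: "y + 8 * y\<^sup>2 + ((t + r)\<^sup>2 / 2 - t\<^sup>2) \<le> 5/2 * r\<^sup>2 + 16 * a + sqrt a + 1 - t\<^sup>2 / 8"
    unfolding s_def by linarith
  have "(1 + y) * exp (8 * y\<^sup>2) * exp ((t + r)\<^sup>2 / 2 - t\<^sup>2) \<le> exp y * exp (8 * y\<^sup>2) * exp ((t + r)\<^sup>2 / 2 - t\<^sup>2)"
    by (intro mult_right_mono exp_ge_add_one_self) auto
  also have "\<dots> = exp (y + 8 * y\<^sup>2 + ((t + r)\<^sup>2 / 2 - t\<^sup>2))"
    by (simp add: exp_add)
  also have "\<dots> \<le> exp (5/2 * r\<^sup>2 + 16 * a + sqrt a + 1 - t\<^sup>2 / 8)"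
    using exponent by simp
  finally show ?thesis .
qed

lemma abs_series_coeff_mult_term_le:
  assumes a: "a > 0" and b: "b > 0" and L: "L \<ge> 0"
  defines "r \<equiv> 12 * sqrt a + 1"
  shows "\<bar>series_coeff a n * series_term b n L\<bar>
    \<le> (1/2) ^ n * (2 / r * exp (5/2 * r\<^sup>2 + 16 * a + sqrt a + 1) * exp (- (b / 4 * L)))"
proof -
  define t where "t = sqrt (2 * b * L)"
  define y where "y = sqrt a * (t + r) / r"
  define F :: real where "F = fact (Suc n)"
  define G where "G = Gamma ((real n + 1) / 2)"
  have rp: "r > 0" using a unfolding r_def by (intro add_nonneg_pos) auto
  have t0: "t \<ge> 0" and tt: "t\<^sup>2 = 2 * b * L" using b L by (simp_all add: t_def)
  have y0: "y \<ge> 0" using a rp t0 by (simp add: y_def)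
  have FG: "F > 0" "G > 0" by (simp_all add: F_def G_def)
  have "\<bar>series_coeff a n * series_term b n L\<bar> = sqrt a ^ n / (F * G) * (exp (- t\<^sup>2 / 2) * \<bar>pin n t\<bar>)"
    using a tt by (simp add: abs_series_coeff abs_mult series_term_def F_def G_def t_def)
  also have "\<dots> \<le> sqrt a ^ n / (F * G)
      * (exp (- t\<^sup>2 / 2) * (F * (t + r) ^ n * exp ((t + r)\<^sup>2 / 2 - t\<^sup>2 / 2) / r ^ Suc n))"
    using abs_pin_le[OF t0 rp, of n] FG a unfolding F_def by (intro mult_left_mono) auto
  also have "\<dots> = 1 / r * (y ^ n / G) * exp ((t + r)\<^sup>2 / 2 - t\<^sup>2)"
  proof -
    have "exp (- t\<^sup>2 / 2) * exp ((t + r)\<^sup>2 / 2 - t\<^sup>2 / 2) = exp ((t + r)\<^sup>2 / 2 - t\<^sup>2)"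
      by (simp add: mult_exp_exp)
    moreover have "y ^ n = sqrt a ^ n * (t + r) ^ n / r ^ n"
      by (simp add: y_def power_divide power_mult_distrib)
    ultimately show ?thesis using FG rp by (simp add: field_simps)
  qed
  also have "\<dots> \<le> 1 / r * (2 * (1 + y) * exp (8 * y\<^sup>2) * (1/2) ^ n) * exp ((t + r)\<^sup>2 / 2 - t\<^sup>2)"
    unfolding G_def using rp y0 by (intro mult_right_mono mult_left_mono power_div_Gamma_half_le) auto
  also have "\<dots> = 2 / r * ((1 + y) * exp (8 * y\<^sup>2) * exp ((t + r)\<^sup>2 / 2 - t\<^sup>2)) * (1/2) ^ n"
    by simp
  also have "\<dots> \<le> 2 / r * exp (5/2 * r\<^sup>2 + 16 * a + sqrt a + 1 - t\<^sup>2 / 8) * (1/2) ^ n"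
    using gaussian_exponent_bound[of a t r] a t0 rp unfolding r_def y_def
    by (intro mult_right_mono mult_left_mono) auto
  also have "\<dots> = (1/2) ^ n * (2 / r * exp (5/2 * r\<^sup>2 + 16 * a + sqrt a + 1) * exp (- (b / 4 * L)))"
  proof -
    have "5/2 * r\<^sup>2 + 16 * a + sqrt a + 1 - t\<^sup>2 / 8 = (5/2 * r\<^sup>2 + 16 * a + sqrt a + 1) + - (b / 4 * L)"
      using tt by simp
    then show ?thesis by (simp only: exp_add mult_ac)
  qed
  finally show ?thesis .
qed

lemma series_bound:
  assumes a: "a > 0" and b: "b > 0"
  obtains C where "C \<ge> 0"
    and "\<And>n L. L \<ge> 0 \<Longrightarrow> \<bar>series_coeff a n * series_term b n L\<bar> \<le> (1/2) ^ n * (C * exp (- (b / 4 * L)))"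
proof
  let ?r = "12 * sqrt a + 1"
  have "?r > 0" using a by (intro add_nonneg_pos) auto
  then show "2 / ?r * exp (5/2 * ?r\<^sup>2 + 16 * a + sqrt a + 1) \<ge> 0" by simp
qed (use abs_series_coeff_mult_term_le[OF a b] in blast)

lemma summable_series:
  assumes "a > 0" "b > 0" "L \<ge> 0"
  shows "summable (\<lambda>n. series_coeff a n * series_term b n L)"
proof -
  obtain C where C: "\<And>n L. L \<ge> 0 \<Longrightarrow>
      \<bar>series_coeff a n * series_term b n L\<bar> \<le> (1/2) ^ n * (C * exp (- (b / 4 * L)))"
    using series_bound[OF assms(1,2)] by blast
  have "summable (\<lambda>n. (1/2 :: real) ^ n * (C * exp (- (b / 4 * L))))"
    by (intro summable_mult2 summable_geometric) simp
  then show ?thesis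
    by (rule summable_comparison_test') (use C assms(3) in simp)
qed

lemma series_term_bound:
  assumes b: "b > 0"
  obtains C where "\<And>L. L \<ge> 0 \<Longrightarrow> \<bar>series_term b n L\<bar> \<le> C * exp (- (b / 4 * L))"
proof -
  obtain C where C: "\<And>n L. L \<ge> 0 \<Longrightarrow>
      \<bar>series_coeff 1 n * series_term b n L\<bar> \<le> (1/2) ^ n * (C * exp (- (b / 4 * L)))"
    using series_bound[of 1 b] b by (metis zero_less_one)
  have c: "\<bar>series_coeff 1 n\<bar> > 0" using series_coeff_nonzero[of 1 n] by simp
  have "\<bar>series_term b n L\<bar> \<le> (1/2) ^ n * C / \<bar>series_coeff 1 n\<bar> * exp (- (b / 4 * L))"
    if "L \<ge> 0" for L
    using C[OF that, of n] c by (simp add: abs_mult field_simps)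
  then show thesis by (rule that)
qed

section \<open>Integrals over the half-line\<close>

lemma has_integral_powr_exp_scaled:
  fixes b x :: real
  assumes b: "b > 0" and x: "x > 0"
  shows "((\<lambda>L. L powr (x - 1) * exp (- (b * L))) has_integral Gamma x / b powr x) {0..}"
proof -
  define f where "f u = u powr (x - 1) / exp u" for u :: real
  have fi: "(f has_integral Gamma x) {0..}" unfolding f_def by (rule Gamma_integral_real[OF x])
  have fa: "f absolutely_integrable_on {0..}"
    by (rule nonnegative_absolutely_integrable_1) (use fi in \<open>auto simp: f_def integrable_on_def\<close>)
  have img: "(\<lambda>L. b * L) ` {0..} = {0..}"
  proof (intro set_eqI iffI)
    fix u assume "u \<in> {0::real..}"
    then have "u = b * (u / b)" "u / b \<in> {0..}" using b by auto
    then show "u \<in> (\<lambda>L. b * L) ` {0..}" by blast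
  qed (use b in auto)
  have "(\<lambda>L. \<bar>b\<bar> * f (b * L)) absolutely_integrable_on {0..}
      \<and> integral {0..} (\<lambda>L. \<bar>b\<bar> * f (b * L)) = Gamma x
    \<longleftrightarrow> f absolutely_integrable_on ((\<lambda>L. b * L) ` {0..}) \<and> integral ((\<lambda>L. b * L) ` {0..}) f = Gamma x"
    by (rule has_absolute_integral_change_of_variables_1')
      (use b in \<open>auto intro!: derivative_eq_intros simp: inj_on_def\<close>)
  then have "((\<lambda>L. \<bar>b\<bar> * f (b * L)) has_integral Gamma x) {0..}"
    unfolding img using fa integral_unique[OF fi]
    by (metis absolutely_integrable_on_def integrable_integral)
  from has_integral_mult_right[OF this, of "1 / b powr x"]
  have "((\<lambda>L. 1 / b powr x * (\<bar>b\<bar> * f (b * L))) has_integral Gamma x / b powr x) {0..}"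
    by simp
  moreover have "1 / b powr x * (\<bar>b\<bar> * f (b * L)) = L powr (x - 1) * exp (- (b * L))"
    if "L \<in> {0..}" for L
  proof -
    have "(b * L) powr (x - 1) = b powr (x - 1) * L powr (x - 1)"
      using that b by (simp add: powr_mult)
    moreover have "b powr x = b * b powr (x - 1)" using b by (simp add: powr_diff)
    ultimately show ?thesis
      using b by (simp add: f_def exp_minus field_simps)
  qed
  ultimately show ?thesis by (rule has_integral_eq[rotated])
qed

lemma has_integral_sqrt_mult_power_exp:
  assumes b: "b > 0"
  shows "((\<lambda>L. sqrt L * L ^ j * exp (- (b * L))) has_integral
    Gamma (real j + 3/2) / (b ^ (j + 1) * sqrt b)) {0..}"
proof -
  have pw: "x powr (real j + 1/2) = sqrt x * x ^ j" if "x \<ge> 0" for x :: real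
  proof (cases "x = 0")
    case False
    then have "x > 0" using that by simp
    then show ?thesis by (simp add: powr_add powr_realpow powr_half_sqrt)
  qed simp
  have "real j + 3/2 = (real j + 1/2) + 1" by simp
  then have "b powr (real j + 3/2) = b powr (real j + 1/2) * b powr 1"
    by (metis powr_add)
  then have "b powr (real j + 3/2) = b ^ (j + 1) * sqrt b"
    using pw[of b] b by simp
  then have "((\<lambda>L. L powr (real j + 1/2) * exp (- (b * L)))
      has_integral Gamma (real j + 3/2) / (b ^ (j + 1) * sqrt b)) {0..}"
    using has_integral_powr_exp_scaled[OF b, of "real j + 3/2"] by (simp add: add.commute)
  then show ?thesis
    by (rule has_integral_eq[rotated]) (simp add: pw)
qed

text \<open>Every \<open>pin n\<close> is an odd polynomial, so its moments reduce to these.\<close>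
lemma has_integral_odd_moment:
  assumes b: "b > 0"
  shows "((\<lambda>L. L ^ j * (exp (- (b * L)) * sqrt (2 * b * L) ^ (2 * k + 1))) has_integral
    sqrt 2 * 2 ^ k * Gamma (real (j + k) + 3/2) / b ^ (j + 1)) {0..}"
proof -
  let ?c = "sqrt 2 * sqrt b * (2 * b) ^ k"
  have "?c * (Gamma (real (j + k) + 3/2) / (b ^ (j + k + 1) * sqrt b))
      = sqrt 2 * 2 ^ k * Gamma (real (j + k) + 3/2) / b ^ (j + 1)"
  proof -
    have "b ^ (j + k + 1) = b ^ (j + 1) * b ^ k" by (simp add: power_add)
    then show ?thesis using b by (simp add: power_mult_distrib divide_simps)
  qed
  then have "((\<lambda>L. ?c * (sqrt L * L ^ (j + k) * exp (- (b * L)))) has_integral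
      sqrt 2 * 2 ^ k * Gamma (real (j + k) + 3/2) / b ^ (j + 1)) {0..}"
    using has_integral_mult_right[OF has_integral_sqrt_mult_power_exp[OF b], of ?c "j + k"] by simp
  moreover have "?c * (sqrt L * L ^ (j + k) * exp (- (b * L)))
      = L ^ j * (exp (- (b * L)) * sqrt (2 * b * L) ^ (2 * k + 1))" if "L \<in> {0..}" for L
  proof -
    have "sqrt (2 * b * L) ^ (2 * k + 1) = (sqrt (2 * b * L) ^ 2) ^ k * sqrt (2 * b * L)"
      by (simp add: power_add power_mult)
    also have "\<dots> = (2 * b * L) ^ k * (sqrt 2 * sqrt b * sqrt L)"
      using that b by (simp add: real_sqrt_mult [symmetric])
    finally show ?thesis by (simp add: power_add power_mult_distrib)
  qed
  ultimately show ?thesis by (rule has_integral_eq[rotated])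
qed

lemma integrable_power_mult_exp:
  fixes b :: real
  assumes b: "b > 0"
  shows "(\<lambda>L. L ^ j * exp (- (b * L))) integrable_on {0..}"
proof (cases j)
  case 0
  then show ?thesis using integrable_on_exp_minus_to_infinity[of b 0] b by simp
next
  case (Suc i)
  have I: "((\<lambda>L. L powr (real j + 1 - 1) * exp (- (b * L))) has_integral
      Gamma (real j + 1) / b powr (real j + 1)) {0..}"
    by (rule has_integral_powr_exp_scaled[OF b]) simp
  have pw: "L powr real j = L ^ j" if "L \<ge> 0" for L :: real
  proof (cases "L = 0")
    case False
    with that show ?thesis by (simp add: powr_realpow)
  qed (simp add: Suc)
  have "((\<lambda>L. L ^ j * exp (- (b * L))) has_integral Gamma (real j + 1) / b powr (real j + 1)) {0..}"
    using I by (rule has_integral_eq[rotated]) (simp add: pw)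
  then show ?thesis by blast
qed

lemma has_integral_atLeast_0_dominated_limit:
  fixes f h :: "real \<Rightarrow> real"
  assumes h: "h integrable_on {0..}"
    and le: "\<And>x. x \<ge> 0 \<Longrightarrow> \<bar>f x\<bar> \<le> h x"
    and F: "\<And>R. R \<ge> 0 \<Longrightarrow> (f has_integral F R) {0..R}"
    and lim: "(\<lambda>n. F (real n)) \<longlonglongrightarrow> l"
  shows "(f has_integral l) {0..}"
proof (rule has_integral_dominated_convergence
    [where f = "\<lambda>k x. if x \<in> {0..real k} then f x else 0", OF _ h _ _ lim])
  fix k :: nat
  have "{0..real k} \<inter> {0..} = {0..real k}" by auto
  then show "((\<lambda>x. if x \<in> {0..real k} then f x else 0) has_integral F (real k)) {0..}"
    unfolding has_integral_restrict_Int using F[of "real k"] by simp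
  show "\<forall>x\<in>{0..}. norm (if x \<in> {0..real k} then f x else 0) \<le> h x"
    using le by (auto intro: order_trans[OF _ le])
next
  show "\<forall>x\<in>{0..}. (\<lambda>k. if x \<in> {0..real k} then f x else 0) \<longlonglongrightarrow> f x"
  proof
    fix x :: real assume x: "x \<in> {0..}"
    obtain N :: nat where N: "x \<le> real N" using real_arch_simple by blast
    have "eventually (\<lambda>k. (if x \<in> {0..real k} then f x else 0) = f x) sequentially"
      using eventually_ge_at_top[of N] by eventually_elim (use x N in auto)
    then show "(\<lambda>k. if x \<in> {0..real k} then f x else 0) \<longlonglongrightarrow> f x"
      by (rule tendsto_eventually)
  qed
qed

lemma has_real_derivative_comp_sqrt:
  assumes b: "b > 0" and L: "L > 0"
    and d: "(\<Phi> has_real_derivative \<phi>) (at (sqrt (2 * b * L)))"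
  shows "((\<lambda>L. \<Phi> (sqrt (2 * b * L))) has_real_derivative \<phi> * b / sqrt (2 * b * L)) (at L)"
proof -
  have "2 * b * L > 0" using b L by simp
  then have "((\<lambda>L. sqrt (2 * b * L)) has_real_derivative inverse (sqrt (2 * b * L)) / 2 * (2 * b)) (at L)"
    by (intro DERIV_chain2[where f = sqrt, OF DERIV_real_sqrt]) (auto intro!: derivative_eq_intros)
  from DERIV_chain2[OF d this] show ?thesis by (simp add: field_simps)
qed

lemma has_integral_zero_by_antiderivative:
  fixes f h \<Phi> \<phi> :: "real \<Rightarrow> real"
  assumes b: "b > 0"
    and h: "h integrable_on {0..}" and le: "\<And>L. L \<ge> 0 \<Longrightarrow> \<bar>f L\<bar> \<le> h L"
    and d: "\<And>t. (\<Phi> has_real_derivative \<phi> t) (at t)"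
    and f: "\<And>L. L > 0 \<Longrightarrow> \<phi> (sqrt (2 * b * L)) * b / sqrt (2 * b * L) = f L"
    and \<Phi>0: "\<Phi> 0 = 0" and lim: "(\<Phi> \<longlongrightarrow> 0) at_top"
  shows "(f has_integral 0) {0..}"
proof (rule has_integral_atLeast_0_dominated_limit[OF h le,
    where F = "\<lambda>R. \<Phi> (sqrt (2 * b * R)) - \<Phi> (sqrt (2 * b * 0))"])
  have cont: "continuous_on UNIV \<Phi>"
    using d by (metis DERIV_isCont continuous_at_imp_continuous_on)
  fix R :: real assume R: "R \<ge> 0"
  show "(f has_integral \<Phi> (sqrt (2 * b * R)) - \<Phi> (sqrt (2 * b * 0))) {0..R}"
  proof (rule fundamental_theorem_of_calculus_interior[OF R])
    show "continuous_on {0..R} (\<lambda>L. \<Phi> (sqrt (2 * b * L)))"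
      by (rule continuous_on_compose2[OF cont]) (auto intro!: continuous_intros)
    fix x assume x: "x \<in> {0<..<R}"
    then have "((\<lambda>L. \<Phi> (sqrt (2 * b * L))) has_real_derivative f x) (at x)"
      using has_real_derivative_comp_sqrt[OF b _ d[of "sqrt (2 * b * x)"]] f[of x] by auto
    then show "((\<lambda>L. \<Phi> (sqrt (2 * b * L))) has_vector_derivative f x) (at x)"
      by (simp add: has_real_derivative_iff_has_vector_derivative)
  qed
next
  have "filterlim (\<lambda>k::nat. 2 * b * real k) at_top sequentially"
    by (rule filterlim_tendsto_pos_mult_at_top[OF tendsto_const])
      (use b in \<open>auto intro: filterlim_real_sequentially\<close>)
  then have "filterlim (\<lambda>k::nat. sqrt (2 * b * real k)) at_top sequentially"
    using filterlim_compose[OF sqrt_at_top] by auto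
  then show "(\<lambda>k. \<Phi> (sqrt (2 * b * real k)) - \<Phi> (sqrt (2 * b * 0))) \<longlonglongrightarrow> 0"
    using filterlim_compose[OF lim] \<Phi>0 by simp
qed

section \<open>Moments of the series terms\<close>

lemma series_term_eq_gauss_deriv:
  assumes "b > 0" "L \<ge> 0"
  shows "series_term b n L = - gauss_deriv n (Suc n) (sqrt (2 * b * L))"
proof -
  have "(sqrt (2 * b * L))\<^sup>2 = 2 * b * L" using assms by simp
  then show ?thesis
    using pin_mult_exp[of n "sqrt (2 * b * L)"] by (simp add: series_term_def mult.commute)
qed

text \<open>In the variable \<open>t = \<surd>(2 b L)\<close> the measures \<open>dL\<close> and \<open>L dL\<close> become \<open>t dt / b\<close> and
  \<open>t\<^sup>3 dt / (2 b\<^sup>2)\<close>. Integrating \<open>t\<^sup>j\<close> by parts against the \<open>(n+1)\<close>-st derivative of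
  \<open>t\<^sup>n e\<^sup>-\<^sup>t\<^sup>\<^sup>2\<^sup>/\<^sup>2\<close> leaves only boundary terms, and these vanish at \<open>0\<close> as long as \<open>j \<le> n\<close>.\<close>
lemma has_integral_series_term_Suc:
  assumes b: "b > 0"
  shows "(series_term b (Suc m) has_integral 0) {0..}"
proof -
  let ?n = "Suc m"
  obtain C where C: "\<And>L. L \<ge> 0 \<Longrightarrow> \<bar>series_term b ?n L\<bar> \<le> C * exp (- (b / 4 * L))"
    using series_term_bound[OF b] by blast
  show ?thesis
  proof (rule has_integral_zero_by_antiderivative[OF b _ C])
    show "(\<lambda>L. C * exp (- (b / 4 * L))) integrable_on {0..}"
      using integrable_on_mult_right[OF integrable_power_mult_exp[of "b / 4" 0], of C] b by simp
    show "((\<lambda>t. - (1 / b) * (t * gauss_deriv ?n ?n t - gauss_deriv ?n m t)) has_real_derivative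
        - (1 / b) * (t * gauss_deriv ?n (Suc ?n) t)) (at t)" for t
      using b by (auto intro!: derivative_eq_intros DERIV_chain2[OF gauss_deriv_has_real_derivative]
          simp: field_simps)
    show "- (1 / b) * (sqrt (2 * b * L) * gauss_deriv ?n (Suc ?n) (sqrt (2 * b * L))) * b
        / sqrt (2 * b * L) = series_term b ?n L" if "L > 0" for L
      using that b by (simp add: series_term_eq_gauss_deriv field_simps)
    show "- (1 / b) * (0 * gauss_deriv ?n ?n 0 - gauss_deriv ?n m 0) = 0"
      by (simp add: gauss_deriv_at_0)
    show "((\<lambda>t. - (1 / b) * (t * gauss_deriv ?n ?n t - gauss_deriv ?n m t)) \<longlongrightarrow> 0) at_top"
      using tendsto_mult[OF tendsto_const[of "- (1 / b)"] tendsto_diff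
          [OF power_mult_gauss_deriv_tendsto_0[of 1 ?n ?n] power_mult_gauss_deriv_tendsto_0[of 0 ?n m]]]
      by simp
  qed
qed

lemma has_integral_series_term_first_moment_ge_3:
  assumes b: "b > 0"
  shows "((\<lambda>L. L * series_term b (m + 3) L) has_integral 0) {0..}"
proof -
  let ?n = "m + 3"
  let ?P = "\<lambda>t. - (1 / (2 * b\<^sup>2)) * (t ^ 3 * gauss_deriv ?n ?n t - 3 * (t ^ 2 * gauss_deriv ?n (m + 2) t)
    + 6 * (t ^ 1 * gauss_deriv ?n (m + 1) t) - 6 * (t ^ 0 * gauss_deriv ?n m t))"
  obtain C where C: "\<And>L. L \<ge> 0 \<Longrightarrow> \<bar>series_term b ?n L\<bar> \<le> C * exp (- (b / 4 * L))"
    using series_term_bound[OF b] by blast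
  have C': "\<bar>L * series_term b ?n L\<bar> \<le> C * (L ^ 1 * exp (- (b / 4 * L)))" if "L \<ge> 0" for L
    using mult_left_mono[OF C[OF that] that] that by (simp add: abs_mult algebra_simps)
  show ?thesis
  proof (rule has_integral_zero_by_antiderivative[OF b _ C'])
    show "(\<lambda>L. C * (L ^ 1 * exp (- (b / 4 * L)))) integrable_on {0..}"
      using b by (intro integrable_on_mult_right integrable_power_mult_exp) auto
    show "(?P has_real_derivative - (1 / (2 * b\<^sup>2)) * (t ^ 3 * gauss_deriv ?n (Suc ?n) t)) (at t)" for t
      using b by (auto intro!: derivative_eq_intros DERIV_chain2[OF gauss_deriv_has_real_derivative]
          simp: field_simps numeral_eq_Suc power2_eq_square)
    show "- (1 / (2 * b\<^sup>2)) * (sqrt (2 * b * L) ^ 3 * gauss_deriv ?n (Suc ?n) (sqrt (2 * b * L))) * b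
        / sqrt (2 * b * L) = L * series_term b ?n L" if "L > 0" for L
    proof -
      have "sqrt (2 * b * L) * sqrt (2 * b * L) = 2 * b * L" using that b by simp
      then have "sqrt (2 * b * L) ^ 3 = 2 * b * L * sqrt (2 * b * L)"
        by (simp only: power3_eq_cube)
      then show ?thesis
        using that b by (simp add: series_term_eq_gauss_deriv field_simps power2_eq_square)
    qed
    show "?P 0 = 0" by (simp add: gauss_deriv_at_0)
    have "(?P \<longlongrightarrow> - (1 / (2 * b\<^sup>2)) * (0 - 3 * 0 + 6 * 0 - 6 * 0)) at_top"
      by (intro tendsto_intros power_mult_gauss_deriv_tendsto_0)
    then show "(?P \<longlongrightarrow> 0) at_top" by simp
  qed
qed

lemma has_integral_series_term:
  assumes b: "b > 0"
  shows "(series_term b n has_integral (if n = 0 then sqrt 2 * sqrt pi / (2 * b) else 0)) {0..}"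
proof (cases n)
  case 0
  have "((\<lambda>L. L ^ 0 * (exp (- (b * L)) * sqrt (2 * b * L) ^ (2 * 0 + 1))) has_integral
      sqrt 2 * 2 ^ 0 * Gamma (real (0 + 0) + 3/2) / b ^ (0 + 1)) {0..}"
    by (rule has_integral_odd_moment[OF b])
  then have "(series_term b n has_integral sqrt 2 * 2 ^ 0 * Gamma (real (0 + 0) + 3/2) / b ^ (0 + 1)) {0..}"
    by (rule has_integral_eq[rotated]) (simp add: 0 series_term_def pin_0)
  then show ?thesis
    by (rule has_integral_eq_rhs) (simp add: 0 Gamma_half_integer_values)
next
  case (Suc m)
  then show ?thesis using has_integral_series_term_Suc[OF b] by simp
qed

lemma has_integral_series_term_first_moment:
  assumes b: "b > 0"
  shows "((\<lambda>L. L * series_term b n L) has_integral sqrt 2 * sqrt pi / b\<^sup>2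
    * (if n = 0 then 3/4 else if n = 1 then -3/2 else if n = 2 then 3/2 else 0)) {0..}"
proof -
  let ?M = "\<lambda>k L. L ^ 1 * (exp (- (b * L)) * sqrt (2 * b * L) ^ (2 * k + 1))"
  let ?I = "\<lambda>k. sqrt 2 * 2 ^ k * Gamma (real (1 + k) + 3/2) / b ^ (1 + 1)"
  have M: "(?M k has_integral ?I k) {0..}" for k
    by (rule has_integral_odd_moment[OF b])
  have I: "?I 0 = sqrt 2 * sqrt pi / b\<^sup>2 * (3/4)" "?I 1 = sqrt 2 * sqrt pi / b\<^sup>2 * (15/4)"
    "?I 2 = sqrt 2 * sqrt pi / b\<^sup>2 * (105/4)"
    by (simp_all add: Gamma_half_integer_values power2_eq_square mult_ac)
  have "n = 0 \<or> n = 1 \<or> n = 2 \<or> (\<exists>m. n = m + 3)" by presburger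
  then consider "n = 0" | "n = 1" | "n = 2" | m where "n = m + 3" by blast
  then show ?thesis
  proof cases
    case 1
    have "((\<lambda>L. L * series_term b 0 L) has_integral ?I 0) {0..}"
      using M[of 0] by (rule has_integral_eq[rotated]) (simp add: series_term_def pin_0)
    then show ?thesis using 1 I by simp
  next
    case 2
    have "((\<lambda>L. 3 * ?M 0 L - ?M 1 L) has_integral 3 * ?I 0 - ?I 1) {0..}"
      by (intro has_integral_diff has_integral_mult_right M)
    then have "((\<lambda>L. L * series_term b 1 L) has_integral 3 * ?I 0 - ?I 1) {0..}"
      by (rule has_integral_eq[rotated]) (unfold series_term_def pin_1, simp add: right_diff_distrib mult_ac)
    then have "((\<lambda>L. L * series_term b 1 L) has_integral sqrt 2 * sqrt pi / b\<^sup>2 * (-3/2)) {0..}"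
      by (rule has_integral_eq_rhs) (simp only: I, simp add: algebra_simps)
    then show ?thesis using 2 by simp
  next
    case 3
    have "((\<lambda>L. 12 * ?M 0 L - 9 * ?M 1 L + ?M 2 L) has_integral 12 * ?I 0 - 9 * ?I 1 + ?I 2) {0..}"
      by (intro has_integral_add has_integral_diff has_integral_mult_right M)
    then have "((\<lambda>L. L * series_term b 2 L) has_integral 12 * ?I 0 - 9 * ?I 1 + ?I 2) {0..}"
      by (rule has_integral_eq[rotated])
        (unfold series_term_def pin_2, simp add: distrib_left right_diff_distrib mult_ac)
    then have "((\<lambda>L. L * series_term b 2 L) has_integral sqrt 2 * sqrt pi / b\<^sup>2 * (3/2)) {0..}"
      by (rule has_integral_eq_rhs) (simp only: I, simp add: algebra_simps)
    then show ?thesis using 3 by simp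
  next
    case (4 m)
    then show ?thesis using has_integral_series_term_first_moment_ge_3[OF b, of m] by simp
  qed
qed

section \<open>Termwise integration of the series\<close>

lemma has_integral_suminf_dominated:
  fixes u :: "nat \<Rightarrow> 'a::euclidean_space \<Rightarrow> real"
  assumes u: "\<And>n. (u n has_integral I n) S"
    and h: "h integrable_on S" and h0: "\<And>x. x \<in> S \<Longrightarrow> h x \<ge> 0"
    and w: "summable w" and w0: "\<And>n. w n \<ge> 0"
    and le: "\<And>n x. x \<in> S \<Longrightarrow> \<bar>u n x\<bar> \<le> w n * h x"
  shows "((\<lambda>x. \<Sum>n. u n x) has_integral (\<Sum>n. I n)) S"
proof (rule has_integral_dominated_convergence
    [where f = "\<lambda>k x. \<Sum>n<k. u n x" and y = "\<lambda>k. \<Sum>n<k. I n" and h = "\<lambda>x. suminf w * h x"])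
  show "((\<lambda>x. \<Sum>n<k. u n x) has_integral (\<Sum>n<k. I n)) S" for k
    by (intro has_integral_sum u) auto
  show "(\<lambda>x. suminf w * h x) integrable_on S"
    by (intro integrable_on_mult_right h)
  show "\<forall>x\<in>S. norm (\<Sum>n<k. u n x) \<le> suminf w * h x" for k
  proof
    fix x assume x: "x \<in> S"
    have "\<bar>\<Sum>n<k. u n x\<bar> \<le> (\<Sum>n<k. w n * h x)"
      by (rule order_trans[OF sum_abs sum_mono]) (rule le[OF x])
    also have "\<dots> = (\<Sum>n<k. w n) * h x" by (simp add: sum_distrib_right)
    also have "\<dots> \<le> suminf w * h x"
      using w w0 h0[OF x] by (intro mult_right_mono sum_le_suminf) auto
    finally show "norm (\<Sum>n<k. u n x) \<le> suminf w * h x" by simp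
  qed
  show "\<forall>x\<in>S. (\<lambda>k. \<Sum>n<k. u n x) \<longlonglongrightarrow> (\<Sum>n. u n x)"
  proof
    fix x assume x: "x \<in> S"
    have "summable (\<lambda>n. u n x)"
      by (rule summable_comparison_test'[where g = "\<lambda>n. w n * h x"])
        (use le[OF x] w in \<open>auto intro: summable_mult2\<close>)
    then show "(\<lambda>k. \<Sum>n<k. u n x) \<longlonglongrightarrow> (\<Sum>n. u n x)" by (rule summable_LIMSEQ)
  qed
  have I_bound: "\<bar>I n\<bar> \<le> w n * integral S h" for n
  proof -
    have "norm (integral S (u n)) \<le> integral S (\<lambda>x. w n * h x)"
      using u le by (intro integral_norm_bound_integral integrable_on_mult_right h) auto
    then show ?thesis using integral_unique[OF u[of n]] by simp
  qed
  have "summable I"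
    by (rule summable_comparison_test'[where g = "\<lambda>n. w n * integral S h", OF summable_mult2[OF w]])
      (simp add: I_bound)
  then show "(\<lambda>k. \<Sum>n<k. I n) \<longlonglongrightarrow> (\<Sum>n. I n)" by (rule summable_LIMSEQ)
qed

lemma has_integral_series:
  assumes a: "a > 0" and b: "b > 0"
  shows "((\<lambda>L. \<Sum>n. series_coeff a n * series_term b n L) has_integral sqrt 2 / (2 * b)) {0..}"
proof -
  obtain C where "C \<ge> 0" and C: "\<And>n L. L \<ge> 0
      \<Longrightarrow> \<bar>series_coeff a n * series_term b n L\<bar> \<le> (1/2) ^ n * (C * exp (- (b / 4 * L)))"
    using series_bound[OF a b] by blast
  have "((\<lambda>L. \<Sum>n. series_coeff a n * series_term b n L) has_integral
      (\<Sum>n. series_coeff a n * (if n = 0 then sqrt 2 * sqrt pi / (2 * b) else 0))) {0..}"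
  proof (rule has_integral_suminf_dominated[OF _ _ _ summable_geometric _ C])
    show "((\<lambda>L. series_coeff a n * series_term b n L) has_integral
        series_coeff a n * (if n = 0 then sqrt 2 * sqrt pi / (2 * b) else 0)) {0..}" for n
      by (intro has_integral_mult_right has_integral_series_term b)
    show "(\<lambda>L. C * exp (- (b / 4 * L))) integrable_on {0..}"
      using integrable_on_mult_right[OF integrable_power_mult_exp[of "b / 4" 0], of C] b by simp
  qed (use \<open>C \<ge> 0\<close> in auto)
  moreover have "(\<Sum>n. series_coeff a n * (if n = 0 then sqrt 2 * sqrt pi / (2 * b) else 0))
      = sqrt 2 / (2 * b)"
    using a by (subst suminf_finite[of "{0}"]) (auto simp: series_coeff_0)
  ultimately show ?thesis by simp
qed

lemma has_integral_series_first_moment: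
  assumes a: "a > 0" and b: "b > 0"
  shows "((\<lambda>L. L * (\<Sum>n. series_coeff a n * series_term b n L)) has_integral
    sqrt 2 * (3 + 3 * sqrt (pi * a) + 2 * a) / (4 * b\<^sup>2)) {0..}"
proof -
  let ?m = "\<lambda>n :: nat. if n = 0 then 3/4 else if n = 1 then -3/2 else if n = 2 then 3/2 else (0 :: real)"
  obtain C where "C \<ge> 0" and C: "\<And>n L. L \<ge> 0
      \<Longrightarrow> \<bar>series_coeff a n * series_term b n L\<bar> \<le> (1/2) ^ n * (C * exp (- (b / 4 * L)))"
    using series_bound[OF a b] by blast
  have "((\<lambda>L. \<Sum>n. L * (series_coeff a n * series_term b n L)) has_integral
      (\<Sum>n. series_coeff a n * (sqrt 2 * sqrt pi / b\<^sup>2 * ?m n))) {0..}"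
  proof (rule has_integral_suminf_dominated[OF _ _ _ summable_geometric,
        where h = "\<lambda>L. C * (L * exp (- (b / 4 * L)))"])
    show "((\<lambda>L. L * (series_coeff a n * series_term b n L)) has_integral
        series_coeff a n * (sqrt 2 * sqrt pi / b\<^sup>2 * ?m n)) {0..}" for n
      using has_integral_mult_right[OF has_integral_series_term_first_moment[OF b, of n], of "series_coeff a n"]
      by (simp add: mult_ac)
    show "(\<lambda>L. C * (L * exp (- (b / 4 * L)))) integrable_on {0..}"
      using integrable_on_mult_right[OF integrable_power_mult_exp[of "b / 4" 1], of C] b by simp
    show "\<bar>L * (series_coeff a n * series_term b n L)\<bar> \<le> (1/2) ^ n * (C * (L * exp (- (b / 4 * L))))"
      if "L \<in> {0..}" for n L
      using mult_left_mono[OF C[of L n], of L] that by (simp add: abs_mult mult_ac)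
  qed (use \<open>C \<ge> 0\<close> in auto)
  moreover have "(\<Sum>n. series_coeff a n * (sqrt 2 * sqrt pi / b\<^sup>2 * ?m n))
      = (\<Sum>n\<in>{0, 1, 2}. series_coeff a n * (sqrt 2 * sqrt pi / b\<^sup>2 * ?m n))"
    by (rule suminf_finite) auto
  moreover have "\<dots> = sqrt 2 * (3 + 3 * sqrt (pi * a) + 2 * a) / (4 * b\<^sup>2)"
    using a b by (simp add: series_coeff_0 series_coeff_1[OF a, unfolded One_nat_def] series_coeff_2
        real_sqrt_mult field_simps)
  moreover have "(\<Sum>n. L * (series_coeff a n * series_term b n L))
      = L * (\<Sum>n. series_coeff a n * series_term b n L)" if "L \<in> {0..}" for L
    using summable_series[OF a b] that by (simp add: suminf_mult)
  ultimately show ?thesis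
    by (metis (no_types, lifting) has_integral_eq)
qed

section \<open>The conditional mean\<close>

lemma jointDensity_eq_series:
  assumes c: "c > 0" and v: "v > 1" and L1: "L1 > 0"
  obtains K where "K > 0" and "\<And>L. L \<ge> 0 \<Longrightarrow> jointDensity c v L1 L
    = K * (\<Sum>n. series_coeff (L1 / (c * (v - 1)\<^sup>2)) n * series_term (v\<^sup>2 / (c * (v - 1)\<^sup>2)) n L)"
proof
  define a where "a = L1 / (c * (v - 1)\<^sup>2)"
  define b where "b = v\<^sup>2 / (c * (v - 1)\<^sup>2)"
  define K where "K = (2 / sqrt pi) * sqrt L1 / c powr (3/2) * exp (- L1 / c) * (sqrt 2 / c) * (v\<^sup>2 / (v - 1)\<^sup>2)"
  have a: "a > 0" and b: "b > 0" using c v L1 by (simp_all add: a_def b_def)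
  show "K > 0" using c v L1 by (simp add: K_def)
  fix L :: real assume L: "L \<ge> 0"
  define e where "e n = series_coeff a n * pin n (sqrt (2 * b * L))" for n
  have terms: "(\<lambda>n. series_coeff a n * series_term b n L) = (\<lambda>n. exp (- (b * L)) * e n)"
    by (simp add: fun_eq_iff e_def series_term_def mult_ac)
  then have "summable e"
    using summable_series[OF a b L] by (simp add: summable_cmult_iff)
  then have "(\<Sum>n. series_coeff a n * series_term b n L) = exp (- (b * L)) * (\<Sum>n. e n)"
    unfolding terms by (rule suminf_mult)
  moreover have "jointDensity c v L1 L = K * exp (- (b * L)) * (\<Sum>n. e n)"
  proof -
    have "- (L * v\<^sup>2) / (c * (v - 1)\<^sup>2) = - (b * L)" "2 * L * v\<^sup>2 / (c * (v - 1)\<^sup>2) = 2 * b * L"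
      by (simp_all add: b_def)
    then show ?thesis
      unfolding jointDensity_def e_def series_coeff_def a_def[symmetric] K_def
      by (simp add: field_simps)
  qed
  ultimately show "jointDensity c v L1 L
    = K * (\<Sum>n. series_coeff (L1 / (c * (v - 1)\<^sup>2)) n * series_term (v\<^sup>2 / (c * (v - 1)\<^sup>2)) n L)"
    by (simp add: a_def b_def)
qed

lemma Lav_eq:
  assumes c: "c > 0" and v: "v > 1" and L1: "L1 \<ge> 0"
  defines "a \<equiv> L1 / (c * (v - 1)\<^sup>2)" and "b \<equiv> v\<^sup>2 / (c * (v - 1)\<^sup>2)"
  shows "Lav c v L1 = (3 + 3 * sqrt (pi * a) + 2 * a) / (2 * b)"
proof -
  define d where "d = v - 1"
  have d: "d > 0" and cd: "c * d > 0" using c v by (simp_all add: d_def)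
  have "pi * a = pi * c * L1 / (c * d)\<^sup>2"
    using c unfolding a_def d_def by (simp add: power_mult_distrib power2_eq_square)
  then have sq: "sqrt (pi * a) = sqrt (pi * c * L1) / (c * d)"
    using cd by (simp add: real_sqrt_divide)
  show ?thesis
    unfolding Lav_def sq unfolding a_def b_def d_def[symmetric]
    using c d v by (simp add: field_simps power2_eq_square)
qed

theorem mainTheorem12:
  fixes c v L1 :: real
  assumes "c = 1/3 \<or> c = 1/2"
    and "v > 1"
    and "L1 > 0"
  shows "\<exists>m > 0. ((\<lambda>L2. jointDensity c v L1 L2) has_integral m) {0..}
            \<and> ((\<lambda>L2. L2 * jointDensity c v L1 L2) has_integral (Lav c v L1 * m)) {0..}"
proof -
  have c: "c > 0" using assms(1) by auto
  define a where "a = L1 / (c * (v - 1)\<^sup>2)"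
  define b where "b = v\<^sup>2 / (c * (v - 1)\<^sup>2)"
  have a: "a > 0" and b: "b > 0" using c assms(2,3) by (simp_all add: a_def b_def)
  obtain K where "K > 0" and density: "\<And>L. L \<ge> 0 \<Longrightarrow>
      jointDensity c v L1 L = K * (\<Sum>n. series_coeff a n * series_term b n L)"
    using jointDensity_eq_series[OF c assms(2,3)] unfolding a_def b_def by blast
  define m where "m = K * (sqrt 2 / (2 * b))"
  have "m > 0" using \<open>K > 0\<close> b by (simp add: m_def)
  have zeroth: "((\<lambda>L2. jointDensity c v L1 L2) has_integral m) {0..}"
    using has_integral_mult_right[OF has_integral_series[OF a b], of K] unfolding m_def
    by (rule has_integral_eq[rotated]) (simp add: density)
  have first: "((\<lambda>L2. L2 * jointDensity c v L1 L2) has_integral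
      K * (sqrt 2 * (3 + 3 * sqrt (pi * a) + 2 * a) / (4 * b\<^sup>2))) {0..}"
    using has_integral_mult_right[OF has_integral_series_first_moment[OF a b], of K]
    by (rule has_integral_eq[rotated]) (simp add: density mult_ac)
  have Lav: "Lav c v L1 = (3 + 3 * sqrt (pi * a) + 2 * a) / (2 * b)"
    using Lav_eq[OF c assms(2), of L1] assms(3) by (simp add: a_def b_def)
  have "K * (sqrt 2 * (3 + 3 * sqrt (pi * a) + 2 * a) / (4 * b\<^sup>2)) = Lav c v L1 * m"
    unfolding Lav m_def using b by (simp add: power2_eq_square field_simps)
  then show ?thesis using \<open>m > 0\<close> zeroth first by auto
qed
end
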